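(* Let $\kappa\in\mathbb{K}$, let $(\mathfrak{g},[-,-,-]_\mathfrak{g},\alpha_\mathfrak{g})$ and $(\mathfrak{h},[-,-,-]_\mathfrak{h},\alpha_\mathfrak{h})$ be regular Hom-Lie triple systems, $\theta$ an action of $\mathfrak{g}$ on $\mathfrak{h}$, and $\mathcal{A}:\mathfrak{h}\to\mathfrak{g}$ a $\kappa$-weighted $\mathcal{O}$-operator with respect to $\theta$. Then there is a bijection between the set of equivalence classes of linear deformations of $\mathcal{A}$ and the first cohomology group $\mathcal{H}^1_\mathcal{A}(\mathfrak{h},\mathfrak{g})$.
   Context: All vector spaces are over a field $\mathbb{K}$ of characteristic zero. A Hom-Lie triple system $(\mathfrak{g},[-,-,-]_\mathfrak{g},\alpha_\mathfrak{g})$ is a vector space with a trilinear map $[-,-,-]_\mathfrak{g}$ and a linear map $\alpha_\mathfrak{g}$ with $\alpha_\mathfrak{g}([x,y,z]_\mathfrak{g})=[\alpha_\mathfrak{g}(x),\alpha_\mathfrak{g}(y),\alpha_\mathfrak{g}(z)]_\mathfrak{g}$ such that for all $x,y,z,a,b$: $[x,y,z]_\mathfrak{g}+[y,x,z]_\mathfrak{g}=0$; $[x,y,z]_\mathfrak{g}+[z,x,y]_\mathfrak{g}+[y,z,x]_\mathfrak{g}=0$; $[\alpha_\mathfrak{g}(a),\alpha_\mathfrak{g}(b),[x,y,z]_\mathfrak{g}]_\mathfrak{g}=[[a,b,x]_\mathfrak{g},\alpha_\mathfrak{g}(y),\alpha_\mathfrak{g}(z)]_\mathfrak{g}+[\alpha_\mathfrak{g}(x),[a,b,y]_\mathfrak{g},\alpha_\mathfrak{g}(z)]_\mathfrak{g}+[\alpha_\mathfrak{g}(x),\alpha_\mathfrak{g}(y),[a,b,z]_\mathfrak{g}]_\mathfrak{g}$.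 It is regular if $\alpha_\mathfrak{g}$ is bijective. A homomorphism $\varphi$ of Hom-Lie triple systems satisfies $\varphi\circ\alpha_1=\alpha_2\circ\varphi$ and $\varphi([x,y,z]_1)=[\varphi x,\varphi y,\varphi z]_2$. A representation of $\mathfrak{g}$ on $(V,\beta)$ is a bilinear map $\theta:\mathfrak{g}\times\mathfrak{g}\to\mathrm{End}(V)$ such that, with $D(x,y)=\theta(y,x)-\theta(x,y)$, for all $x,y,a,b$: $\theta(\alpha_\mathfrak{g}(x),\alpha_\mathfrak{g}(y))\circ\beta=\beta\circ\theta(x,y)$; $\theta(\alpha_\mathfrak{g}(a),\alpha_\mathfrak{g}(b))\theta(x,y)-\theta(\alpha_\mathfrak{g}(y),\alpha_\mathfrak{g}(b))\theta(x,a)-\theta(\alpha_\mathfrak{g}(x),[y,a,b]_\mathfrak{g})\circ\beta+D(\alpha_\mathfrak{g}(y),\alpha_\mathfrak{g}(a))\theta(x,b)=0$; $\theta(\alpha_\mathfrak{g}(a),\alpha_\mathfrak{g}(b))D(x,y)-D(\alpha_\mathfrak{g}(x),\alpha_\mathfrak{g}(y))\theta(a,b)+\theta([x,y,a]_\mathfrak{g},\alpha_\mathfrak{g}(b))\circ\beta+\theta(\alpha_\mathfrak{g}(a),[x,y,b]_\mathfrak{g})\circ\beta=0$. An action of $\mathfrak{g}$ on a Hom-Lie triple system $(\mathfrak{h},[-,-,-]_\mathfrak{h},\alpha_\mathfrak{h})$ is a representation $\theta$ of $\mathfrak{g}$ on $(\mathfrak{h},\alpha_\mathfrak{h})$ such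 that for all $x,y\in\mathfrak{g}$, $u,v,w\in\mathfrak{h}$: $\theta(\alpha_\mathfrak{g}(x),\alpha_\mathfrak{g}(y))[u,v,w]_\mathfrak{h}=[\theta(x,y)u,\alpha_\mathfrak{h}(v),\alpha_\mathfrak{h}(w)]_\mathfrak{h}+[\alpha_\mathfrak{h}(u),\theta(x,y)v,\alpha_\mathfrak{h}(w)]_\mathfrak{h}+[\alpha_\mathfrak{h}(u),\alpha_\mathfrak{h}(v),\theta(x,y)w]_\mathfrak{h}$ and $\theta(\alpha_\mathfrak{g}(x),\alpha_\mathfrak{g}(y))[u,v,w]_\mathfrak{h}=[\alpha_\mathfrak{h}(u),\alpha_\mathfrak{h}(v),\theta(x,y)w]_\mathfrak{h}=0$. A $\kappa$-weighted $\mathcal{O}$-operator from $\mathfrak{h}$ to $\mathfrak{g}$ with respect to $\theta$ is a linear map $\mathcal{A}:\mathfrak{h}\to\mathfrak{g}$ with $\mathcal{A}\circ\alpha_\mathfrak{h}=\alpha_\mathfrak{g}\circ\mathcal{A}$ and $[\mathcal{A}u,\mathcal{A}v,\mathcal{A}w]_\mathfrak{g}=\mathcal{A}\big(D(\mathcal{A}u,\mathcal{A}v)w-\theta(\mathcal{A}u,\mathcal{A}w)v+\theta(\mathcal{A}v,\mathcal{A}w)u+\kappa[u,v,w]_\mathfrak{h}\big)$. A homomorphism from such an operator $\mathcal{A}_1$ to another $\mathcal{A}_2$ is a pair of Hom-Lie triple system homomorphisms $\varphi_\mathfrak{h}:\mathfrak{h}\to\mathfrak{h}$, $\varphi_\mathfrak{g}:\mathfrak{g}\to\mathfrak{g}$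 with $\varphi_\mathfrak{g}\circ\mathcal{A}_1=\mathcal{A}_2\circ\varphi_\mathfrak{h}$ and $\varphi_\mathfrak{h}(\theta(x,y)u)=\theta(\varphi_\mathfrak{g}(x),\varphi_\mathfrak{g}(y))\varphi_\mathfrak{h}(u)$. Cohomology: put $\{u,v,w\}_\mathcal{A}=D(\mathcal{A}u,\mathcal{A}v)w-\theta(\mathcal{A}u,\mathcal{A}w)v+\theta(\mathcal{A}v,\mathcal{A}w)u+\kappa[u,v,w]_\mathfrak{h}$, $\theta_\mathcal{A}(u,v)(x)=[x,\mathcal{A}u,\mathcal{A}v]_\mathfrak{g}+\mathcal{A}(\theta(x,\mathcal{A}v)u-D(x,\mathcal{A}u)v)$ and $D_\mathcal{A}(u,v)=\theta_\mathcal{A}(v,u)-\theta_\mathcal{A}(u,v)$. The 1-cocycles $\mathcal{Z}^1_\mathcal{A}(\mathfrak{h},\mathfrak{g})$ are linear maps $f:\mathfrak{h}\to\mathfrak{g}$ with $\alpha_\mathfrak{g}\circ f=f\circ\alpha_\mathfrak{h}$ and $\theta_\mathcal{A}(v_2,v_3)f(v_1)-\theta_\mathcal{A}(v_1,v_3)f(v_2)+D_\mathcal{A}(v_1,v_2)f(v_3)-f(\{v_1,v_2,v_3\}_\mathcal{A})=0$ for all $v_i\in\mathfrak{h}$. For $a,b\in\mathfrak{g}$ with $\alpha_\mathfrak{g}(a)=a,\alpha_\mathfrak{g}(b)=b$ let $\Im(a,b)v=\mathcal{A}(D(a,b)\alpha_\mathfrak{h}^{-1}(v))-[a,b,\mathcal{A}\alpha_\mathfrak{h}^{-1}(v)]_\mathfrak{g}$;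 the 1-coboundaries $\mathcal{B}^1_\mathcal{A}(\mathfrak{h},\mathfrak{g})$ form the span of all such $\Im(a,b)$ (these lie in $\mathcal{Z}^1_\mathcal{A}$), and $\mathcal{H}^1_\mathcal{A}(\mathfrak{h},\mathfrak{g})=\mathcal{Z}^1_\mathcal{A}(\mathfrak{h},\mathfrak{g})/\mathcal{B}^1_\mathcal{A}(\mathfrak{h},\mathfrak{g})$. A linear deformation of $\mathcal{A}$ is $\mathcal{A}_t=\mathcal{A}+t\mathcal{A}_1$ with $\mathcal{A}_1:\mathfrak{h}\to\mathfrak{g}$ linear and $t$ a parameter with $t^2=0$, such that $\mathcal{A}_t$ is a $\kappa$-weighted $\mathcal{O}$-operator (all structures extended $\mathbb{K}[t]/(t^2)$-linearly). Two linear deformations $\mathcal{A}_t=\mathcal{A}+t\mathcal{A}_1$ and $\mathcal{A}'_t=\mathcal{A}+t\mathcal{A}'_1$ are equivalent if there exist $a,b\in\mathfrak{g}$ with $\alpha_\mathfrak{g}(a)=a$, $\alpha_\mathfrak{g}(b)=b$ such that the pair $(\mathrm{Id}_\mathfrak{h}+t\,\alpha_\mathfrak{h}^{-1}\circ D(a,b),\ \mathrm{Id}_\mathfrak{g}+t\,\alpha_\mathfrak{g}^{-1}\circ\mathcal{L}(a,b))$, where $\mathcal{L}(a,b)x=[a,b,x]_\mathfrak{g}$, is a homomorphism from $\mathcal{A}_t$ to $\mathcal{A}'_t$ (the first map playing the role of $\varphi_\mathfrak{h}$, the second of $\varphi_\mathfrak{g}$). *)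

theory Defs
  imports Complex_Main "HOL-Library.Function_Algebras" "HOL-Library.Product_Plus"
begin

text \<open>Vector spaces over a field 'k of characteristic zero are modelled as types
  of class ab_group_add together with a scalar multiplication s satisfying
  the locale vector_space s.\<close>

definition trilinear ::
  "('k::field \<Rightarrow> 'a::ab_group_add \<Rightarrow> 'a) \<Rightarrow> ('a \<Rightarrow> 'a \<Rightarrow> 'a \<Rightarrow> 'a) \<Rightarrow> bool" where
  "trilinear s br \<longleftrightarrow>
     (\<forall>y z. Vector_Spaces.linear s s (\<lambda>x. br x y z)) \<and>
     (\<forall>x z. Vector_Spaces.linear s s (\<lambda>y. br x y z)) \<and>
     (\<forall>x y. Vector_Spaces.linear s s (\<lambda>z. br x y z))"

definition HLTS ::
  "('k::field \<Rightarrow> 'a::ab_group_add \<Rightarrow> 'a) \<Rightarrow> ('a \<Rightarrow> 'a \<Rightarrow> 'a \<Rightarrow> 'a) \<Rightarrow> ('a \<Rightarrow> 'a) \<Rightarrow> bool" where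
  "HLTS s br \<alpha> \<longleftrightarrow>
     vector_space s \<and> trilinear s br \<and> Vector_Spaces.linear s s \<alpha> \<and>
     (\<forall>x y z. \<alpha> (br x y z) = br (\<alpha> x) (\<alpha> y) (\<alpha> z)) \<and>
     (\<forall>x y z. br x y z + br y x z = 0) \<and>
     (\<forall>x y z. br x y z + br z x y + br y z x = 0) \<and>
     (\<forall>a b x y z. br (\<alpha> a) (\<alpha> b) (br x y z) =
          br (br a b x) (\<alpha> y) (\<alpha> z) + br (\<alpha> x) (br a b y) (\<alpha> z)
          + br (\<alpha> x) (\<alpha> y) (br a b z))"

definition regular_HLTS ::
  "('k::field \<Rightarrow> 'a::ab_group_add \<Rightarrow> 'a) \<Rightarrow> ('a \<Rightarrow> 'a \<Rightarrow> 'a \<Rightarrow> 'a) \<Rightarrow> ('a \<Rightarrow> 'a) \<Rightarrow> bool" where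
  "regular_HLTS s br \<alpha> \<longleftrightarrow> HLTS s br \<alpha> \<and> bij \<alpha>"

definition HLTS_hom ::
  "('a \<Rightarrow> 'a \<Rightarrow> 'a \<Rightarrow> 'a) \<Rightarrow> ('a \<Rightarrow> 'a) \<Rightarrow> ('b \<Rightarrow> 'b \<Rightarrow> 'b \<Rightarrow> 'b) \<Rightarrow> ('b \<Rightarrow> 'b)
    \<Rightarrow> ('a \<Rightarrow> 'b) \<Rightarrow> bool" where
  "HLTS_hom br1 \<alpha>1 br2 \<alpha>2 \<phi> \<longleftrightarrow>
     \<phi> \<circ> \<alpha>1 = \<alpha>2 \<circ> \<phi> \<and> (\<forall>x y z. \<phi> (br1 x y z) = br2 (\<phi> x) (\<phi> y) (\<phi> z))"

definition Dop :: "('g \<Rightarrow> 'g \<Rightarrow> 'v \<Rightarrow> 'v::ab_group_add) \<Rightarrow> 'g \<Rightarrow> 'g \<Rightarrow> 'v \<Rightarrow> 'v" where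
  "Dop \<theta> x y v = \<theta> y x v - \<theta> x y v"

definition representation ::
  "('k::field \<Rightarrow> 'g::ab_group_add \<Rightarrow> 'g) \<Rightarrow> ('g \<Rightarrow> 'g \<Rightarrow> 'g \<Rightarrow> 'g) \<Rightarrow> ('g \<Rightarrow> 'g)
   \<Rightarrow> ('k \<Rightarrow> 'v::ab_group_add \<Rightarrow> 'v) \<Rightarrow> ('v \<Rightarrow> 'v) \<Rightarrow> ('g \<Rightarrow> 'g \<Rightarrow> 'v \<Rightarrow> 'v) \<Rightarrow> bool" where
  "representation sg br \<alpha> sV \<beta> \<theta> \<longleftrightarrow>
     vector_space sV \<and> Vector_Spaces.linear sV sV \<beta> \<and>
     (\<forall>x y. Vector_Spaces.linear sV sV (\<theta> x y)) \<and>
     (\<forall>y v. Vector_Spaces.linear sg sV (\<lambda>x. \<theta> x y v)) \<and>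
     (\<forall>x v. Vector_Spaces.linear sg sV (\<lambda>y. \<theta> x y v)) \<and>
     (\<forall>x y v. \<theta> (\<alpha> x) (\<alpha> y) (\<beta> v) = \<beta> (\<theta> x y v)) \<and>
     (\<forall>a b x y v. \<theta> (\<alpha> a) (\<alpha> b) (\<theta> x y v) - \<theta> (\<alpha> y) (\<alpha> b) (\<theta> x a v)
         - \<theta> (\<alpha> x) (br y a b) (\<beta> v) + Dop \<theta> (\<alpha> y) (\<alpha> a) (\<theta> x b v) = 0) \<and>
     (\<forall>a b x y v. \<theta> (\<alpha> a) (\<alpha> b) (Dop \<theta> x y v) - Dop \<theta> (\<alpha> x) (\<alpha> y) (\<theta> a b v)
         + \<theta> (br x y a) (\<alpha> b) (\<beta> v) + \<theta> (\<alpha> a) (br x y b) (\<beta> v) = 0)"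

definition action ::
  "('k::field \<Rightarrow> 'g::ab_group_add \<Rightarrow> 'g) \<Rightarrow> ('g \<Rightarrow> 'g \<Rightarrow> 'g \<Rightarrow> 'g) \<Rightarrow> ('g \<Rightarrow> 'g)
   \<Rightarrow> ('k \<Rightarrow> 'h::ab_group_add \<Rightarrow> 'h) \<Rightarrow> ('h \<Rightarrow> 'h \<Rightarrow> 'h \<Rightarrow> 'h) \<Rightarrow> ('h \<Rightarrow> 'h)
   \<Rightarrow> ('g \<Rightarrow> 'g \<Rightarrow> 'h \<Rightarrow> 'h) \<Rightarrow> bool" where
  "action sg brg \<alpha>g sh brh \<alpha>h \<theta> \<longleftrightarrow>
     representation sg brg \<alpha>g sh \<alpha>h \<theta> \<and>
     (\<forall>x y u v w. \<theta> (\<alpha>g x) (\<alpha>g y) (brh u v w) =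
        brh (\<theta> x y u) (\<alpha>h v) (\<alpha>h w) + brh (\<alpha>h u) (\<theta> x y v) (\<alpha>h w)
        + brh (\<alpha>h u) (\<alpha>h v) (\<theta> x y w)) \<and>
     (\<forall>x y u v w. \<theta> (\<alpha>g x) (\<alpha>g y) (brh u v w) = 0 \<and>
        brh (\<alpha>h u) (\<alpha>h v) (\<theta> x y w) = 0)"

text \<open>The defining identities of a kappa-weighted O-operator (without the
  linearity requirement), stated for arbitrary bracket/twist/action data, so
  that it can be applied both to the original structures and to their
  K[t]/(t^2)-extensions.\<close>
definition O_identities ::
  "('k \<Rightarrow> 'h::ab_group_add \<Rightarrow> 'h) \<Rightarrow> ('g \<Rightarrow> 'g \<Rightarrow> 'g \<Rightarrow> 'g) \<Rightarrow> ('g \<Rightarrow> 'g)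
   \<Rightarrow> ('h \<Rightarrow> 'h \<Rightarrow> 'h \<Rightarrow> 'h) \<Rightarrow> ('h \<Rightarrow> 'h) \<Rightarrow> ('g \<Rightarrow> 'g \<Rightarrow> 'h \<Rightarrow> 'h) \<Rightarrow> 'k
   \<Rightarrow> ('h \<Rightarrow> 'g) \<Rightarrow> bool" where
  "O_identities sh brg \<alpha>g brh \<alpha>h \<theta> \<kappa> A \<longleftrightarrow>
     A \<circ> \<alpha>h = \<alpha>g \<circ> A \<and>
     (\<forall>u v w. brg (A u) (A v) (A w) =
        A (Dop \<theta> (A u) (A v) w - \<theta> (A u) (A w) v + \<theta> (A v) (A w) u + sh \<kappa> (brh u v w)))"

definition O_operator ::
  "('k::field \<Rightarrow> 'g::ab_group_add \<Rightarrow> 'g) \<Rightarrow> ('g \<Rightarrow> 'g \<Rightarrow> 'g \<Rightarrow> 'g) \<Rightarrow> ('g \<Rightarrow> 'g)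
   \<Rightarrow> ('k \<Rightarrow> 'h::ab_group_add \<Rightarrow> 'h) \<Rightarrow> ('h \<Rightarrow> 'h \<Rightarrow> 'h \<Rightarrow> 'h) \<Rightarrow> ('h \<Rightarrow> 'h)
   \<Rightarrow> ('g \<Rightarrow> 'g \<Rightarrow> 'h \<Rightarrow> 'h) \<Rightarrow> 'k \<Rightarrow> ('h \<Rightarrow> 'g) \<Rightarrow> bool" where
  "O_operator sg brg \<alpha>g sh brh \<alpha>h \<theta> \<kappa> A \<longleftrightarrow>
     Vector_Spaces.linear sh sg A \<and> O_identities sh brg \<alpha>g brh \<alpha>h \<theta> \<kappa> A"

definition O_hom ::
  "('g \<Rightarrow> 'g \<Rightarrow> 'g \<Rightarrow> 'g) \<Rightarrow> ('g \<Rightarrow> 'g) \<Rightarrow> ('h \<Rightarrow> 'h \<Rightarrow> 'h \<Rightarrow> 'h) \<Rightarrow> ('h \<Rightarrow> 'h)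
   \<Rightarrow> ('g \<Rightarrow> 'g \<Rightarrow> 'h \<Rightarrow> 'h) \<Rightarrow> ('h \<Rightarrow> 'g) \<Rightarrow> ('h \<Rightarrow> 'g) \<Rightarrow> ('h \<Rightarrow> 'h) \<Rightarrow> ('g \<Rightarrow> 'g) \<Rightarrow> bool" where
  "O_hom brg \<alpha>g brh \<alpha>h \<theta> A1 A2 \<phi>h \<phi>g \<longleftrightarrow>
     HLTS_hom brh \<alpha>h brh \<alpha>h \<phi>h \<and> HLTS_hom brg \<alpha>g brg \<alpha>g \<phi>g \<and>
     \<phi>g \<circ> A1 = A2 \<circ> \<phi>h \<and>
     (\<forall>x y u. \<phi>h (\<theta> x y u) = \<theta> (\<phi>g x) (\<phi>g y) (\<phi>h u))"

text \<open>An element x0 + t x1 of V[t]/(t^2) is represented by the pair (x0, x1).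
  All structures are extended K[t]/(t^2)-(multi)linearly, using t^2 = 0.\<close>

definition ext_br :: "('a::ab_group_add \<Rightarrow> 'a \<Rightarrow> 'a \<Rightarrow> 'a) \<Rightarrow> 'a \<times> 'a \<Rightarrow> 'a \<times> 'a \<Rightarrow> 'a \<times> 'a \<Rightarrow> 'a \<times> 'a" where
  "ext_br br x y z = (br (fst x) (fst y) (fst z),
      br (snd x) (fst y) (fst z) + br (fst x) (snd y) (fst z) + br (fst x) (fst y) (snd z))"

definition ext_map :: "('a \<Rightarrow> 'b) \<Rightarrow> 'a \<times> 'a \<Rightarrow> 'b \<times> 'b" where
  "ext_map f x = (f (fst x), f (snd x))"

definition ext_scale :: "('k \<Rightarrow> 'a \<Rightarrow> 'a) \<Rightarrow> 'k \<Rightarrow> 'a \<times> 'a \<Rightarrow> 'a \<times> 'a" where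
  "ext_scale s c x = (s c (fst x), s c (snd x))"

definition ext_theta :: "('g \<Rightarrow> 'g \<Rightarrow> 'h \<Rightarrow> 'h::ab_group_add) \<Rightarrow> 'g \<times> 'g \<Rightarrow> 'g \<times> 'g \<Rightarrow> 'h \<times> 'h \<Rightarrow> 'h \<times> 'h" where
  "ext_theta \<theta> x y u = (\<theta> (fst x) (fst y) (fst u),
      \<theta> (snd x) (fst y) (fst u) + \<theta> (fst x) (snd y) (fst u) + \<theta> (fst x) (fst y) (snd u))"

text \<open>The map f0 + t f1 (f0, f1 K-linear) acting on V[t]/(t^2).\<close>
definition ext_lin :: "('a \<Rightarrow> 'b::ab_group_add) \<Rightarrow> ('a \<Rightarrow> 'b) \<Rightarrow> 'a \<times> 'a \<Rightarrow> 'b \<times> 'b" where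
  "ext_lin f0 f1 x = (f0 (fst x), f0 (snd x) + f1 (fst x))"

text \<open>A linear deformation A + t A1 is identified with the linear map A1.\<close>
definition linear_deformations ::
  "('k::field \<Rightarrow> 'g::ab_group_add \<Rightarrow> 'g) \<Rightarrow> ('g \<Rightarrow> 'g \<Rightarrow> 'g \<Rightarrow> 'g) \<Rightarrow> ('g \<Rightarrow> 'g)
   \<Rightarrow> ('k \<Rightarrow> 'h::ab_group_add \<Rightarrow> 'h) \<Rightarrow> ('h \<Rightarrow> 'h \<Rightarrow> 'h \<Rightarrow> 'h) \<Rightarrow> ('h \<Rightarrow> 'h)
   \<Rightarrow> ('g \<Rightarrow> 'g \<Rightarrow> 'h \<Rightarrow> 'h) \<Rightarrow> 'k \<Rightarrow> ('h \<Rightarrow> 'g) \<Rightarrow> ('h \<Rightarrow> 'g) set" where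
  "linear_deformations sg brg \<alpha>g sh brh \<alpha>h \<theta> \<kappa> A =
     {A1. Vector_Spaces.linear sh sg A1 \<and>
          O_identities (ext_scale sh) (ext_br brg) (ext_map \<alpha>g) (ext_br brh) (ext_map \<alpha>h)
             (ext_theta \<theta>) \<kappa> (ext_lin A A1)}"

definition equivalent_deformations ::
  "('k::field \<Rightarrow> 'g::ab_group_add \<Rightarrow> 'g) \<Rightarrow> ('g \<Rightarrow> 'g \<Rightarrow> 'g \<Rightarrow> 'g) \<Rightarrow> ('g \<Rightarrow> 'g)
   \<Rightarrow> ('k \<Rightarrow> 'h::ab_group_add \<Rightarrow> 'h) \<Rightarrow> ('h \<Rightarrow> 'h \<Rightarrow> 'h \<Rightarrow> 'h) \<Rightarrow> ('h \<Rightarrow> 'h)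
   \<Rightarrow> ('g \<Rightarrow> 'g \<Rightarrow> 'h \<Rightarrow> 'h) \<Rightarrow> 'k \<Rightarrow> ('h \<Rightarrow> 'g) \<Rightarrow> (('h \<Rightarrow> 'g) \<times> ('h \<Rightarrow> 'g)) set" where
  "equivalent_deformations sg brg \<alpha>g sh brh \<alpha>h \<theta> \<kappa> A =
     {(A1, A1'). A1 \<in> linear_deformations sg brg \<alpha>g sh brh \<alpha>h \<theta> \<kappa> A \<and>
                 A1' \<in> linear_deformations sg brg \<alpha>g sh brh \<alpha>h \<theta> \<kappa> A \<and>
       (\<exists>a b. \<alpha>g a = a \<and> \<alpha>g b = b \<and>
          O_hom (ext_br brg) (ext_map \<alpha>g) (ext_br brh) (ext_map \<alpha>h) (ext_theta \<theta>)
            (ext_lin A A1) (ext_lin A A1')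
            (ext_lin id (\<lambda>u. inv \<alpha>h (Dop \<theta> a b u)))
            (ext_lin id (\<lambda>x. inv \<alpha>g (brg a b x))))}"

definition deformation_classes ::
  "('k::field \<Rightarrow> 'g::ab_group_add \<Rightarrow> 'g) \<Rightarrow> ('g \<Rightarrow> 'g \<Rightarrow> 'g \<Rightarrow> 'g) \<Rightarrow> ('g \<Rightarrow> 'g)
   \<Rightarrow> ('k \<Rightarrow> 'h::ab_group_add \<Rightarrow> 'h) \<Rightarrow> ('h \<Rightarrow> 'h \<Rightarrow> 'h \<Rightarrow> 'h) \<Rightarrow> ('h \<Rightarrow> 'h)
   \<Rightarrow> ('g \<Rightarrow> 'g \<Rightarrow> 'h \<Rightarrow> 'h) \<Rightarrow> 'k \<Rightarrow> ('h \<Rightarrow> 'g) \<Rightarrow> ('h \<Rightarrow> 'g) set set" where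
  "deformation_classes sg brg \<alpha>g sh brh \<alpha>h \<theta> \<kappa> A =
     (let D = linear_deformations sg brg \<alpha>g sh brh \<alpha>h \<theta> \<kappa> A;
          R = equivalent_deformations sg brg \<alpha>g sh brh \<alpha>h \<theta> \<kappa> A
      in D // (Id_on D \<union> (R \<union> R\<inverse>)\<^sup>+))"

definition bracket_A ::
  "('g \<Rightarrow> 'g \<Rightarrow> 'h \<Rightarrow> 'h::ab_group_add) \<Rightarrow> ('k \<Rightarrow> 'h \<Rightarrow> 'h) \<Rightarrow> ('h \<Rightarrow> 'h \<Rightarrow> 'h \<Rightarrow> 'h)
   \<Rightarrow> 'k \<Rightarrow> ('h \<Rightarrow> 'g) \<Rightarrow> 'h \<Rightarrow> 'h \<Rightarrow> 'h \<Rightarrow> 'h" where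
  "bracket_A \<theta> sh brh \<kappa> A u v w =
     Dop \<theta> (A u) (A v) w - \<theta> (A u) (A w) v + \<theta> (A v) (A w) u + sh \<kappa> (brh u v w)"

definition theta_A ::
  "('g \<Rightarrow> 'g \<Rightarrow> 'g \<Rightarrow> 'g::ab_group_add) \<Rightarrow> ('g \<Rightarrow> 'g \<Rightarrow> 'h \<Rightarrow> 'h::ab_group_add)
   \<Rightarrow> ('h \<Rightarrow> 'g) \<Rightarrow> 'h \<Rightarrow> 'h \<Rightarrow> 'g \<Rightarrow> 'g" where
  "theta_A brg \<theta> A u v x = brg x (A u) (A v) + A (\<theta> x (A v) u - Dop \<theta> x (A u) v)"

definition D_A ::
  "('g \<Rightarrow> 'g \<Rightarrow> 'g \<Rightarrow> 'g::ab_group_add) \<Rightarrow> ('g \<Rightarrow> 'g \<Rightarrow> 'h \<Rightarrow> 'h::ab_group_add)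
   \<Rightarrow> ('h \<Rightarrow> 'g) \<Rightarrow> 'h \<Rightarrow> 'h \<Rightarrow> 'g \<Rightarrow> 'g" where
  "D_A brg \<theta> A u v x = theta_A brg \<theta> A v u x - theta_A brg \<theta> A u v x"

definition cocycles1 ::
  "('k::field \<Rightarrow> 'g::ab_group_add \<Rightarrow> 'g) \<Rightarrow> ('g \<Rightarrow> 'g \<Rightarrow> 'g \<Rightarrow> 'g) \<Rightarrow> ('g \<Rightarrow> 'g)
   \<Rightarrow> ('k \<Rightarrow> 'h::ab_group_add \<Rightarrow> 'h) \<Rightarrow> ('h \<Rightarrow> 'h \<Rightarrow> 'h \<Rightarrow> 'h) \<Rightarrow> ('h \<Rightarrow> 'h)
   \<Rightarrow> ('g \<Rightarrow> 'g \<Rightarrow> 'h \<Rightarrow> 'h) \<Rightarrow> 'k \<Rightarrow> ('h \<Rightarrow> 'g) \<Rightarrow> ('h \<Rightarrow> 'g) set" where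
  "cocycles1 sg brg \<alpha>g sh brh \<alpha>h \<theta> \<kappa> A =
     {f. Vector_Spaces.linear sh sg f \<and> \<alpha>g \<circ> f = f \<circ> \<alpha>h \<and>
        (\<forall>v1 v2 v3. theta_A brg \<theta> A v2 v3 (f v1) - theta_A brg \<theta> A v1 v3 (f v2)
            + D_A brg \<theta> A v1 v2 (f v3) - f (bracket_A \<theta> sh brh \<kappa> A v1 v2 v3) = 0)}"

definition Im_cob ::
  "('g \<Rightarrow> 'g \<Rightarrow> 'g \<Rightarrow> 'g::ab_group_add) \<Rightarrow> ('h \<Rightarrow> 'h) \<Rightarrow> ('g \<Rightarrow> 'g \<Rightarrow> 'h \<Rightarrow> 'h::ab_group_add)
   \<Rightarrow> ('h \<Rightarrow> 'g) \<Rightarrow> 'g \<Rightarrow> 'g \<Rightarrow> 'h \<Rightarrow> 'g" where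
  "Im_cob brg \<alpha>h \<theta> A a b v = A (Dop \<theta> a b (inv \<alpha>h v)) - brg a b (A (inv \<alpha>h v))"

definition coboundaries1 ::
  "('k::field \<Rightarrow> 'g::ab_group_add \<Rightarrow> 'g) \<Rightarrow> ('g \<Rightarrow> 'g \<Rightarrow> 'g \<Rightarrow> 'g) \<Rightarrow> ('g \<Rightarrow> 'g)
   \<Rightarrow> ('h::ab_group_add \<Rightarrow> 'h) \<Rightarrow> ('g \<Rightarrow> 'g \<Rightarrow> 'h \<Rightarrow> 'h) \<Rightarrow> ('h \<Rightarrow> 'g) \<Rightarrow> ('h \<Rightarrow> 'g) set" where
  "coboundaries1 sg brg \<alpha>g \<alpha>h \<theta> A =
     module.span (\<lambda>c f. \<lambda>v. sg c (f v))
       {Im_cob brg \<alpha>h \<theta> A a b | a b. \<alpha>g a = a \<and> \<alpha>g b = b}"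

definition cohomology1 ::
  "('k::field \<Rightarrow> 'g::ab_group_add \<Rightarrow> 'g) \<Rightarrow> ('g \<Rightarrow> 'g \<Rightarrow> 'g \<Rightarrow> 'g) \<Rightarrow> ('g \<Rightarrow> 'g)
   \<Rightarrow> ('k \<Rightarrow> 'h::ab_group_add \<Rightarrow> 'h) \<Rightarrow> ('h \<Rightarrow> 'h \<Rightarrow> 'h \<Rightarrow> 'h) \<Rightarrow> ('h \<Rightarrow> 'h)
   \<Rightarrow> ('g \<Rightarrow> 'g \<Rightarrow> 'h \<Rightarrow> 'h) \<Rightarrow> 'k \<Rightarrow> ('h \<Rightarrow> 'g) \<Rightarrow> ('h \<Rightarrow> 'g) set set" where
  "cohomology1 sg brg \<alpha>g sh brh \<alpha>h \<theta> \<kappa> A =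
     (let Z = cocycles1 sg brg \<alpha>g sh brh \<alpha>h \<theta> \<kappa> A;
          B = coboundaries1 sg brg \<alpha>g \<alpha>h \<theta> A
      in Z // {(f, f'). f \<in> Z \<and> f' \<in> Z \<and> f - f' \<in> B})"

end

(* The O-operator identity for A + t A1 splits into the identity for A and, in the t-component,
   the cocycle condition for A1: the cocycle map is the linearisation of the O-operator
   identity, so linear deformations are exactly the 1-cocycles.
   For alpha-fixed a, b the maps alpha_h^-1 D(a,b) and alpha_g^-1 L(a,b) are compatible
   derivations of h, g and theta, so Id + t(...) is an automorphism pair, and it intertwines
   A + t A1 with A + t A1' exactly when A1 - A1' is the coboundary Im(a,b).  As the Im(a,b)
   are closed under scalars (c Im(a,b) = Im(c a, b)), the equivalence relation they generate
   on cocycles is congruence modulo their span B^1.  Hence the classes of deformations are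
   literally the elements of H^1, and the bijection is the identity. *)

theory Submission
  imports Defs
begin

definition diff_rel :: "'a::ab_group_add set \<Rightarrow> 'a set \<Rightarrow> ('a \<times> 'a) set" where
  "diff_rel Z S = {(f, g). f \<in> Z \<and> g \<in> Z \<and> f - g \<in> S}"

lemma (in module) diff_rel_subset_span: "diff_rel Z S \<subseteq> diff_rel Z (span S)"
  by (auto simp: diff_rel_def span_base)

lemma (in module) converse_diff_rel_span: "(diff_rel Z (span S))\<inverse> = diff_rel Z (span S)"
  using span_neg minus_diff_eq by (fastforce simp: diff_rel_def)

lemma (in module) trans_diff_rel_span: "trans (diff_rel Z (span S))"
  using span_add by (fastforce simp: diff_rel_def intro!: transI)

lemma (in module) equiv_closure_diff_rel:
  assumes S_Z: "S \<subseteq> Z"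
    and Z_diff: "\<And>f g. f \<in> Z \<Longrightarrow> g \<in> Z \<Longrightarrow> f - g \<in> Z"
    and S_scale: "\<And>c s. s \<in> S \<Longrightarrow> c *s s \<in> S"
  shows "Id_on Z \<union> (diff_rel Z S \<union> (diff_rel Z S)\<inverse>)\<^sup>+ = diff_rel Z (span S)"
    (is "Id_on Z \<union> ?R\<^sup>+ = _")
proof
  have "?R \<subseteq> diff_rel Z (span S)"
    using diff_rel_subset_span converse_diff_rel_span by blast
  then have "?R\<^sup>+ \<subseteq> (diff_rel Z (span S))\<^sup>+"
    by (meson subsetI trancl_mono)
  also have "\<dots> = diff_rel Z (span S)"
    using trans_diff_rel_span by (rule trancl_id)
  finally show "Id_on Z \<union> ?R\<^sup>+ \<subseteq> diff_rel Z (span S)"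
    by (auto simp: diff_rel_def span_zero)
next
  have "\<forall>f g. f \<in> Z \<longrightarrow> g \<in> Z \<longrightarrow> f - g = d \<longrightarrow> (f, g) \<in> Id_on Z \<union> ?R\<^sup>+"
    if "d \<in> span S" for d
    using that
  proof (induction rule: span_induct_alt)
    case base
    show ?case
      by (simp add: Id_on_iff)
  next
    case (step c s d)
    show ?case
    proof (intro allI impI)
      fix f g assume f: "f \<in> Z" and g: "g \<in> Z" and fg: "f - g = c *s s + d"
      have cs: "c *s s \<in> S" using step.hyps(1) by (rule S_scale)
      define f' where "f' = f - c *s s"
      have f': "f' \<in> Z" unfolding f'_def using f cs S_Z by (blast intro: Z_diff)
      have "(f, f') \<in> ?R"
        using f f' cs by (simp add: diff_rel_def f'_def)
      moreover have "f' - g = d"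
        using fg by (simp add: f'_def algebra_simps)
      then have "(f', g) \<in> Id_on Z \<union> ?R\<^sup>+"
        using step.IH f' g by blast
      ultimately show "(f, g) \<in> Id_on Z \<union> ?R\<^sup>+"
        by (blast intro: trancl_into_trancl2)
    qed
  qed
  then show "diff_rel Z (span S) \<subseteq> Id_on Z \<union> ?R\<^sup>+"
    unfolding diff_rel_def by blast
qed

lemma linear_inv_bij:
  assumes lin: "Vector_Spaces.linear s s f" and "bij f"
  shows "Vector_Spaces.linear s s (inv f)"
proof -
  interpret bijection f by (rule bijection.intro) fact
  have add: "f (x + y) = f x + f y" and scale: "f (s c x) = s c (f x)" for c x y
    using lin by (simp_all add: Vector_Spaces.linear_iff)
  have "inv f (x + y) = inv f (f (inv f x + inv f y))" for x y
    by (simp add: add)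
  moreover have "inv f (s c x) = inv f (f (s c (inv f x)))" for c x
    by (simp add: scale)
  ultimately show ?thesis
    using lin by (simp add: Vector_Spaces.linear_iff)
qed

locale weighted_O_operator =
  fixes sg :: "'k::field \<Rightarrow> 'g::ab_group_add \<Rightarrow> 'g"
    and sh :: "'k \<Rightarrow> 'h::ab_group_add \<Rightarrow> 'h"
    and brg :: "'g \<Rightarrow> 'g \<Rightarrow> 'g \<Rightarrow> 'g" and \<alpha>g :: "'g \<Rightarrow> 'g"
    and brh :: "'h \<Rightarrow> 'h \<Rightarrow> 'h \<Rightarrow> 'h" and \<alpha>h :: "'h \<Rightarrow> 'h"
    and \<theta> :: "'g \<Rightarrow> 'g \<Rightarrow> 'h \<Rightarrow> 'h"
    and \<kappa> :: 'k and A :: "'h \<Rightarrow> 'g"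
  assumes HLTS_g: "HLTS sg brg \<alpha>g"
    and HLTS_h: "HLTS sh brh \<alpha>h"
    and rep: "representation sg brg \<alpha>g sh \<alpha>h \<theta>"
    and O_op: "O_operator sg brg \<alpha>g sh brh \<alpha>h \<theta> \<kappa> A"
begin

abbreviation "bracketA \<equiv> bracket_A \<theta> sh brh \<kappa> A"
abbreviation "Z1 \<equiv> cocycles1 sg brg \<alpha>g sh brh \<alpha>h \<theta> \<kappa> A"

lemma vector_space_g: "vector_space sg" and vector_space_h: "vector_space sh"
  using HLTS_g HLTS_h by (simp_all add: HLTS_def)

lemma vector_space_pair_hg: "vector_space_pair sh sg"
  by (simp add: vector_space_pair_def vector_space_g vector_space_h)

lemma linear_maps:
  "Vector_Spaces.linear sg sg (\<lambda>x. brg x y z)" "Vector_Spaces.linear sg sg (\<lambda>y. brg x y z)"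
  "Vector_Spaces.linear sg sg (\<lambda>z. brg x y z)" "Vector_Spaces.linear sh sh (\<lambda>u. brh u v w)"
  "Vector_Spaces.linear sh sh (\<lambda>v. brh u v w)" "Vector_Spaces.linear sh sh (\<lambda>w. brh u v w)"
  "Vector_Spaces.linear sg sh (\<lambda>x. \<theta> x y u)" "Vector_Spaces.linear sg sh (\<lambda>y. \<theta> x y u)"
  "Vector_Spaces.linear sh sh (\<theta> x y)" "Vector_Spaces.linear sh sg A"
  "Vector_Spaces.linear sg sg \<alpha>g" "Vector_Spaces.linear sh sh \<alpha>h"
  "Vector_Spaces.linear sg sg (sg c)" "Vector_Spaces.linear sh sh (sh c)"
  using HLTS_g HLTS_h rep O_op vector_space_g vector_space_h
  by (simp_all add: HLTS_def trilinear_def representation_def O_operator_def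
      vector_space.linear_scale_self)

lemmas module_hom_maps = linear_maps[THEN module_hom_linearI]
lemmas additivity =
  module_hom_maps[THEN module_hom.add] module_hom_maps[THEN module_hom.diff]
  module_hom_maps[THEN module_hom.neg] module_hom_maps[THEN module_hom.zero]
lemmas scaling = module_hom_maps[THEN module_hom.scale]

lemma brg_skew: "brg y x z = - brg x y z"
  using HLTS_g by (simp add: HLTS_def eq_neg_iff_add_eq_0)

lemma brg_cyclic: "brg x y z = brg z y x - brg z x y"
proof -
  have "brg x y z + brg z x y + brg y z x = 0"
    using HLTS_g by (simp add: HLTS_def)
  then show ?thesis
    using brg_skew[of y z x] by (simp add: algebra_simps eq_neg_iff_add_eq_0)
qed

lemma A_alpha: "A (\<alpha>h u) = \<alpha>g (A u)"
  using O_op by (simp add: O_operator_def O_identities_def fun_eq_iff)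

lemma A_bracket: "brg (A u) (A v) (A w) = A (bracketA u v w)"
  using O_op by (simp add: O_operator_def O_identities_def bracket_A_def)

definition delta1 :: "('h \<Rightarrow> 'g) \<Rightarrow> 'h \<Rightarrow> 'h \<Rightarrow> 'h \<Rightarrow> 'g" where
  "delta1 f u v w = theta_A brg \<theta> A v w (f u) - theta_A brg \<theta> A u w (f v)
     + D_A brg \<theta> A u v (f w) - f (bracketA u v w)"

lemma cocycles1_iff:
  "f \<in> Z1 \<longleftrightarrow> Vector_Spaces.linear sh sg f \<and> \<alpha>g \<circ> f = f \<circ> \<alpha>h \<and> (\<forall>u v w. delta1 f u v w = 0)"
  by (simp add: cocycles1_def delta1_def)

(* the t-derivative of bracketA u v w when A is replaced by A + t f *)
definition bracket_variation :: "('h \<Rightarrow> 'g) \<Rightarrow> 'h \<Rightarrow> 'h \<Rightarrow> 'h \<Rightarrow> 'h" where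
  "bracket_variation f u v w =
     Dop \<theta> (f u) (A v) w + Dop \<theta> (A u) (f v) w - \<theta> (f u) (A w) v - \<theta> (A u) (f w) v
     + \<theta> (f v) (A w) u + \<theta> (A v) (f w) u"

lemma delta1_eq:
  "delta1 f u v w = brg (f u) (A v) (A w) + brg (A u) (f v) (A w) + brg (A u) (A v) (f w)
     - A (bracket_variation f u v w) - f (bracketA u v w)"
  using brg_cyclic[of "A u" "A v" "f w"] brg_skew[of "f v" "A u" "A w"]
  by (simp add: delta1_def D_A_def theta_A_def bracket_variation_def Dop_def additivity
      algebra_simps)

lemma ext_br_ext_lin:
  "ext_br brg (ext_lin A f (u, u')) (ext_lin A f (v, v')) (ext_lin A f (w, w')) =
     (A (bracketA u v w),
      A (bracketA u' v w + bracketA u v' w + bracketA u v w')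
      + (brg (f u) (A v) (A w) + brg (A u) (f v) (A w) + brg (A u) (A v) (f w)))"
  by (simp add: ext_br_def ext_lin_def additivity A_bracket algebra_simps)

lemma bracket_A_ext_lin:
  "bracket_A (ext_theta \<theta>) (ext_scale sh) (ext_br brh) \<kappa> (ext_lin A f) (u, u') (v, v') (w, w') =
     (bracketA u v w,
      bracketA u' v w + bracketA u v' w + bracketA u v w' + bracket_variation f u v w)"
  by (simp add: bracket_A_def ext_theta_def ext_scale_def ext_br_def ext_lin_def
      bracket_variation_def Dop_def additivity algebra_simps)

lemma O_defect_ext_lin:
  "ext_br brg (ext_lin A f (u, u')) (ext_lin A f (v, v')) (ext_lin A f (w, w'))
   - ext_lin A f (bracket_A (ext_theta \<theta>) (ext_scale sh) (ext_br brh) \<kappa> (ext_lin A f) (u, u') (v, v') (w, w'))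
   = (0, delta1 f u v w)"
  unfolding ext_br_ext_lin bracket_A_ext_lin by (simp add: ext_lin_def delta1_eq additivity)

lemma ext_lin_alpha_iff:
  "ext_lin A f \<circ> ext_map \<alpha>h = ext_map \<alpha>g \<circ> ext_lin A f \<longleftrightarrow> \<alpha>g \<circ> f = f \<circ> \<alpha>h"
  by (auto simp: fun_eq_iff ext_lin_def ext_map_def A_alpha additivity)

lemma O_identities_ext_lin_iff:
  "O_identities (ext_scale sh) (ext_br brg) (ext_map \<alpha>g) (ext_br brh) (ext_map \<alpha>h) (ext_theta \<theta>) \<kappa>
     (ext_lin A f) \<longleftrightarrow> \<alpha>g \<circ> f = f \<circ> \<alpha>h \<and> (\<forall>u v w. delta1 f u v w = 0)"
proof -
  have "ext_br brg (ext_lin A f (u, u')) (ext_lin A f (v, v')) (ext_lin A f (w, w')) =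
        ext_lin A f (bracket_A (ext_theta \<theta>) (ext_scale sh) (ext_br brh) \<kappa> (ext_lin A f)
          (u, u') (v, v') (w, w'))
        \<longleftrightarrow> delta1 f u v w = 0" for u u' v v' w w'
    by (subst eq_iff_diff_eq_0) (simp add: O_defect_ext_lin zero_prod_def)
  then show ?thesis
    unfolding O_identities_def ext_lin_alpha_iff bracket_A_def[symmetric]
    by simp
qed

lemma linear_deformations_eq_cocycles1:
  "linear_deformations sg brg \<alpha>g sh brh \<alpha>h \<theta> \<kappa> A = Z1"
  by (auto simp: linear_deformations_def cocycles1_iff O_identities_ext_lin_iff)

lemma delta1_diff: "delta1 (f - f') u v w = delta1 f u v w - delta1 f' u v w"
  by (simp add: delta1_def theta_A_def D_A_def Dop_def additivity algebra_simps)

lemma cocycles1_diff: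
  assumes "f \<in> Z1" and "f' \<in> Z1"
  shows "f - f' \<in> Z1"
proof -
  have "Vector_Spaces.linear sh sg (f - f')"
    using assms vector_space_pair_hg unfolding cocycles1_iff fun_diff_def
    by (blast intro: vector_space_pair.linear_compose_sub)
  with assms show ?thesis
    by (simp add: cocycles1_iff delta1_diff fun_eq_iff additivity)
qed

definition derivation_pair :: "('h \<Rightarrow> 'h) \<Rightarrow> ('g \<Rightarrow> 'g) \<Rightarrow> bool" where
  "derivation_pair P Q \<longleftrightarrow>
     Vector_Spaces.linear sh sh P \<and> Vector_Spaces.linear sg sg Q \<and>
     P \<circ> \<alpha>h = \<alpha>h \<circ> P \<and> Q \<circ> \<alpha>g = \<alpha>g \<circ> Q \<and>
     (\<forall>u v w. P (brh u v w) = brh (P u) v w + brh u (P v) w + brh u v (P w)) \<and>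
     (\<forall>x y z. Q (brg x y z) = brg (Q x) y z + brg x (Q y) z + brg x y (Q z)) \<and>
     (\<forall>x y u. P (\<theta> x y u) = \<theta> (Q x) y u + \<theta> x (Q y) u + \<theta> x y (P u))"

context
  fixes P :: "'h \<Rightarrow> 'h" and Q :: "'g \<Rightarrow> 'g"
  assumes der: "derivation_pair P Q"
begin

lemma linear_P: "Vector_Spaces.linear sh sh P" and linear_Q: "Vector_Spaces.linear sg sg Q"
  and P_alpha: "P (\<alpha>h u) = \<alpha>h (P u)" and Q_alpha: "Q (\<alpha>g x) = \<alpha>g (Q x)"
  and P_brh: "P (brh u v w) = brh (P u) v w + brh u (P v) w + brh u v (P w)"
  and Q_brg: "Q (brg x y z) = brg (Q x) y z + brg x (Q y) z + brg x y (Q z)"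
  and P_theta: "P (\<theta> x y u) = \<theta> (Q x) y u + \<theta> x (Q y) u + \<theta> x y (P u)"
  using der by (simp_all add: derivation_pair_def fun_eq_iff)

lemmas PQ_module_hom = linear_P[THEN module_hom_linearI] linear_Q[THEN module_hom_linearI]
lemmas PQ_linearity =
  PQ_module_hom[THEN module_hom.add] PQ_module_hom[THEN module_hom.diff]
  PQ_module_hom[THEN module_hom.neg] PQ_module_hom[THEN module_hom.scale]

lemma P_bracketA:
  "P (bracketA u v w) = bracketA (P u) v w + bracketA u (P v) w + bracketA u v (P w)
     - bracket_variation (\<lambda>u. A (P u) - Q (A u)) u v w"
  by (simp add: bracket_A_def bracket_variation_def Dop_def P_theta P_brh PQ_linearity
      additivity algebra_simps)

lemma derivation_pair_cocycle: "(\<lambda>u. A (P u) - Q (A u)) \<in> Z1"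
proof -
  let ?f = "\<lambda>u. A (P u) - Q (A u)"
  have "Vector_Spaces.linear sh sg (A \<circ> P)" "Vector_Spaces.linear sh sg (Q \<circ> A)"
    using linear_maps linear_P linear_Q by (blast intro: Vector_Spaces.linear_compose)+
  then have "Vector_Spaces.linear sh sg ?f"
    using vector_space_pair.linear_compose_sub[OF vector_space_pair_hg] by fastforce
  moreover have "\<alpha>g \<circ> ?f = ?f \<circ> \<alpha>h"
    by (simp add: fun_eq_iff P_alpha Q_alpha A_alpha additivity)
  moreover have "delta1 ?f u v w = 0" for u v w
  proof -
    have "brg (?f u) (A v) (A w) + brg (A u) (?f v) (A w) + brg (A u) (A v) (?f w)
          = A (bracketA (P u) v w + bracketA u (P v) w + bracketA u v (P w)) - Q (A (bracketA u v w))"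
      using Q_brg[of "A u" "A v" "A w"] by (simp add: additivity A_bracket)
    then show ?thesis
      by (simp add: delta1_eq P_bracketA additivity)
  qed
  ultimately show ?thesis
    by (simp add: cocycles1_iff)
qed

lemma O_hom_ext_lin_iff:
  "O_hom (ext_br brg) (ext_map \<alpha>g) (ext_br brh) (ext_map \<alpha>h) (ext_theta \<theta>)
     (ext_lin A f) (ext_lin A f') (ext_lin id P) (ext_lin id Q)
   \<longleftrightarrow> f - f' = (\<lambda>u. A (P u) - Q (A u))"
proof -
  have "HLTS_hom (ext_br brh) (ext_map \<alpha>h) (ext_br brh) (ext_map \<alpha>h) (ext_lin id P)"
    by (simp add: HLTS_hom_def fun_eq_iff ext_lin_def ext_map_def ext_br_def P_alpha P_brh
        PQ_linearity additivity algebra_simps)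
  moreover have "HLTS_hom (ext_br brg) (ext_map \<alpha>g) (ext_br brg) (ext_map \<alpha>g) (ext_lin id Q)"
    by (simp add: HLTS_hom_def fun_eq_iff ext_lin_def ext_map_def ext_br_def Q_alpha Q_brg
        PQ_linearity additivity algebra_simps)
  moreover have "ext_lin id P (ext_theta \<theta> x y u)
      = ext_theta \<theta> (ext_lin id Q x) (ext_lin id Q y) (ext_lin id P u)" for x y u
    by (simp add: ext_lin_def ext_theta_def P_theta PQ_linearity additivity algebra_simps)
  moreover have "ext_lin id Q \<circ> ext_lin A f = ext_lin A f' \<circ> ext_lin id P
      \<longleftrightarrow> f - f' = (\<lambda>u. A (P u) - Q (A u))"
  proof -
    have "(ext_lin id Q \<circ> ext_lin A f) (p, q) - (ext_lin A f' \<circ> ext_lin id P) (p, q)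
        = (0, (f p - f' p) - (A (P p) - Q (A p)))" for p q
      by (simp add: ext_lin_def additivity algebra_simps)
    then have "(ext_lin id Q \<circ> ext_lin A f) (p, q) = (ext_lin A f' \<circ> ext_lin id P) (p, q)
        \<longleftrightarrow> f p - f' p = A (P p) - Q (A p)" for p q
      by (subst eq_iff_diff_eq_0) (simp add: zero_prod_def)
    then show ?thesis
      by (simp add: fun_eq_iff)
  qed
  ultimately show ?thesis
    by (simp add: O_hom_def)
qed

end

end

locale regular_weighted_O_operator =
  fixes sg :: "'k::field \<Rightarrow> 'g::ab_group_add \<Rightarrow> 'g"
    and sh :: "'k \<Rightarrow> 'h::ab_group_add \<Rightarrow> 'h"
    and brg :: "'g \<Rightarrow> 'g \<Rightarrow> 'g \<Rightarrow> 'g" and \<alpha>g :: "'g \<Rightarrow> 'g"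
    and brh :: "'h \<Rightarrow> 'h \<Rightarrow> 'h \<Rightarrow> 'h" and \<alpha>h :: "'h \<Rightarrow> 'h"
    and \<theta> :: "'g \<Rightarrow> 'g \<Rightarrow> 'h \<Rightarrow> 'h"
    and \<kappa> :: 'k and A :: "'h \<Rightarrow> 'g"
  assumes regular_g: "regular_HLTS sg brg \<alpha>g"
    and regular_h: "regular_HLTS sh brh \<alpha>h"
    and act: "action sg brg \<alpha>g sh brh \<alpha>h \<theta>"
    and O_op: "O_operator sg brg \<alpha>g sh brh \<alpha>h \<theta> \<kappa> A"

sublocale regular_weighted_O_operator \<subseteq> weighted_O_operator
proof
  show "HLTS sg brg \<alpha>g" "HLTS sh brh \<alpha>h"
    using regular_g regular_h by (simp_all add: regular_HLTS_def)
  show "representation sg brg \<alpha>g sh \<alpha>h \<theta>"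
    using act unfolding action_def by blast
  show "O_operator sg brg \<alpha>g sh brh \<alpha>h \<theta> \<kappa> A"
    by (fact O_op)
qed

context regular_weighted_O_operator
begin

lemma bij_alpha: "bij \<alpha>g" "bij \<alpha>h"
  using regular_g regular_h by (simp_all add: regular_HLTS_def)

lemma inv_alpha [simp]:
  "inv \<alpha>g (\<alpha>g x) = x" "\<alpha>g (inv \<alpha>g x) = x" "inv \<alpha>h (\<alpha>h u) = u" "\<alpha>h (inv \<alpha>h u) = u"
  using bij_alpha by (simp_all add: bij_is_inj bij_is_surj surj_f_inv_f)

lemmas inv_module_hom =
  linear_inv_bij[OF linear_maps(11) bij_alpha(1), THEN module_hom_linearI]
  linear_inv_bij[OF linear_maps(12) bij_alpha(2), THEN module_hom_linearI]
lemmas inv_linearity =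
  inv_module_hom[THEN module_hom.add] inv_module_hom[THEN module_hom.diff]
  inv_module_hom[THEN module_hom.scale]

lemma alpha_brg: "\<alpha>g (brg x y z) = brg (\<alpha>g x) (\<alpha>g y) (\<alpha>g z)"
  using HLTS_g unfolding HLTS_def by blast

lemma alpha_theta: "\<theta> (\<alpha>g x) (\<alpha>g y) (\<alpha>h u) = \<alpha>h (\<theta> x y u)"
  using rep unfolding representation_def by blast

lemma inv_alpha_brg: "inv \<alpha>g (brg x y z) = brg (inv \<alpha>g x) (inv \<alpha>g y) (inv \<alpha>g z)"
  by (rule inv_f_eq) (simp_all add: bij_is_inj bij_alpha alpha_brg)

lemma inv_alpha_brh: "inv \<alpha>h (brh u v w) = brh (inv \<alpha>h u) (inv \<alpha>h v) (inv \<alpha>h w)"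
  using HLTS_h by (intro inv_f_eq) (simp_all add: bij_is_inj bij_alpha HLTS_def)

lemma inv_alpha_theta: "inv \<alpha>h (\<theta> x y u) = \<theta> (inv \<alpha>g x) (inv \<alpha>g y) (inv \<alpha>h u)"
  by (rule inv_f_eq) (simp_all add: bij_is_inj bij_alpha alpha_theta[symmetric])

lemma A_inv_alpha: "A (inv \<alpha>h u) = inv \<alpha>g (A u)"
  by (rule inv_f_eq[symmetric]) (simp_all add: bij_is_inj bij_alpha A_alpha[symmetric])

context
  fixes a b :: 'g
  assumes fixed: "\<alpha>g a = a" "\<alpha>g b = b"
begin

lemma Dop_alpha_commute: "Dop \<theta> a b (\<alpha>h u) = \<alpha>h (Dop \<theta> a b u)"
  using alpha_theta[of a b u] alpha_theta[of b a u] fixed by (simp add: Dop_def additivity)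

lemma brg_alpha_commute: "brg a b (\<alpha>g x) = \<alpha>g (brg a b x)"
  using alpha_brg[of a b x] fixed by simp

lemma inner_derivation_brh:
  "inv \<alpha>h (Dop \<theta> a b (brh u v w)) = brh (inv \<alpha>h (Dop \<theta> a b u)) v w
     + brh u (inv \<alpha>h (Dop \<theta> a b v)) w + brh u v (inv \<alpha>h (Dop \<theta> a b w))"
proof -
  have "\<theta> (\<alpha>g x) (\<alpha>g y) (brh u v w) = brh (\<theta> x y u) (\<alpha>h v) (\<alpha>h w)
      + brh (\<alpha>h u) (\<theta> x y v) (\<alpha>h w) + brh (\<alpha>h u) (\<alpha>h v) (\<theta> x y w)" for x y
    \<comment> \<open>only this clause of the action is needed, not the vanishing clause of the definition\<close>
    using act unfolding action_def by blast
  from this[of a b] this[of b a] fixed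
  have "Dop \<theta> a b (brh u v w) = brh (Dop \<theta> a b u) (\<alpha>h v) (\<alpha>h w)
      + brh (\<alpha>h u) (Dop \<theta> a b v) (\<alpha>h w) + brh (\<alpha>h u) (\<alpha>h v) (Dop \<theta> a b w)"
    by (simp add: Dop_def additivity algebra_simps)
  then show ?thesis
    by (simp add: inv_alpha_brh inv_linearity)
qed

lemma inner_derivation_brg:
  "inv \<alpha>g (brg a b (brg x y z)) = brg (inv \<alpha>g (brg a b x)) y z
     + brg x (inv \<alpha>g (brg a b y)) z + brg x y (inv \<alpha>g (brg a b z))"
proof -
  have "brg (\<alpha>g a') (\<alpha>g b') (brg x y z) = brg (brg a' b' x) (\<alpha>g y) (\<alpha>g z)
      + brg (\<alpha>g x) (brg a' b' y) (\<alpha>g z) + brg (\<alpha>g x) (\<alpha>g y) (brg a' b' z)" for a' b'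
    using HLTS_g unfolding HLTS_def by blast
  from this[of a b] fixed show ?thesis
    by (simp add: inv_alpha_brg inv_linearity)
qed

lemma inner_derivation_theta:
  "inv \<alpha>h (Dop \<theta> a b (\<theta> x y u)) = \<theta> (inv \<alpha>g (brg a b x)) y u
     + \<theta> x (inv \<alpha>g (brg a b y)) u + \<theta> x y (inv \<alpha>h (Dop \<theta> a b u))"
proof -
  have "\<theta> (\<alpha>g x) (\<alpha>g y) (Dop \<theta> a' b' u) - Dop \<theta> (\<alpha>g a') (\<alpha>g b') (\<theta> x y u)
      + \<theta> (brg a' b' x) (\<alpha>g y) (\<alpha>h u) + \<theta> (\<alpha>g x) (brg a' b' y) (\<alpha>h u) = 0" for a' b'
    using rep unfolding representation_def by blast
  from this[of a b] fixed
  have "Dop \<theta> a b (\<theta> x y u) = \<theta> (brg a b x) (\<alpha>g y) (\<alpha>h u)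
      + \<theta> (\<alpha>g x) (brg a b y) (\<alpha>h u) + \<theta> (\<alpha>g x) (\<alpha>g y) (Dop \<theta> a b u)"
    by (simp add: algebra_simps)
  then show ?thesis
    by (simp add: inv_alpha_theta inv_linearity)
qed

lemma Im_cob_eq_inner_derivation:
  "Im_cob brg \<alpha>h \<theta> A a b = (\<lambda>u. A (inv \<alpha>h (Dop \<theta> a b u)) - inv \<alpha>g (brg a b (A u)))"
proof -
  have "Dop \<theta> a b (inv \<alpha>h u) = inv \<alpha>h (Dop \<theta> a b u)" for u
    using Dop_alpha_commute[of "inv \<alpha>h u"] by simp
  moreover have "brg a b (inv \<alpha>g x) = inv \<alpha>g (brg a b x)" for x
    using brg_alpha_commute[of "inv \<alpha>g x"] by simp
  ultimately show ?thesis
    by (simp add: fun_eq_iff Im_cob_def A_inv_alpha)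
qed

lemma derivation_pair_inner:
  "derivation_pair (\<lambda>u. inv \<alpha>h (Dop \<theta> a b u)) (\<lambda>x. inv \<alpha>g (brg a b x))"
proof -
  have "Vector_Spaces.linear sh sh (\<lambda>u. inv \<alpha>h (Dop \<theta> a b u))"
    by (simp add: Vector_Spaces.linear_iff vector_space_h Dop_def additivity scaling inv_linearity)
  moreover have "Vector_Spaces.linear sg sg (\<lambda>x. inv \<alpha>g (brg a b x))"
    by (simp add: Vector_Spaces.linear_iff vector_space_g additivity scaling inv_linearity)
  ultimately show ?thesis
    by (simp add: derivation_pair_def fun_eq_iff Dop_alpha_commute brg_alpha_commute inner_derivation_brh inner_derivation_brg inner_derivation_theta)
qed

end

lemma Im_cob_scale: "(\<lambda>v. sg c (Im_cob brg \<alpha>h \<theta> A a b v)) = Im_cob brg \<alpha>h \<theta> A (sg c a) b"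
  by (simp add: fun_eq_iff Im_cob_def Dop_def scaling additivity)

lemma equivalent_deformations_eq:
  "equivalent_deformations sg brg \<alpha>g sh brh \<alpha>h \<theta> \<kappa> A
   = diff_rel Z1 {Im_cob brg \<alpha>h \<theta> A a b | a b. \<alpha>g a = a \<and> \<alpha>g b = b}"
proof -
  have "(\<alpha>g a = a \<and> \<alpha>g b = b \<and>
         O_hom (ext_br brg) (ext_map \<alpha>g) (ext_br brh) (ext_map \<alpha>h) (ext_theta \<theta>)
           (ext_lin A f) (ext_lin A f') (ext_lin id (\<lambda>u. inv \<alpha>h (Dop \<theta> a b u)))
           (ext_lin id (\<lambda>x. inv \<alpha>g (brg a b x))))
    \<longleftrightarrow> (\<alpha>g a = a \<and> \<alpha>g b = b \<and> f - f' = Im_cob brg \<alpha>h \<theta> A a b)" for a b f f'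
    by (auto simp: O_hom_ext_lin_iff[OF derivation_pair_inner] Im_cob_eq_inner_derivation)
  then show ?thesis
    unfolding equivalent_deformations_def linear_deformations_eq_cocycles1 diff_rel_def
    by blast
qed

lemma deformation_classes_eq_cohomology1:
  "deformation_classes sg brg \<alpha>g sh brh \<alpha>h \<theta> \<kappa> A = cohomology1 sg brg \<alpha>g sh brh \<alpha>h \<theta> \<kappa> A"
proof -
  interpret fun_module: module "\<lambda>c (f :: 'h \<Rightarrow> 'g) v. sg c (f v)"
    using vector_space_g by (simp add: vector_space_def module_def fun_eq_iff)
  let ?S = "{Im_cob brg \<alpha>h \<theta> A a b | a b. \<alpha>g a = a \<and> \<alpha>g b = b}"
  have "?S \<subseteq> Z1"
    using derivation_pair_cocycle[OF derivation_pair_inner] Im_cob_eq_inner_derivation by auto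
  moreover have "(\<lambda>v. sg c (s v)) \<in> ?S" if "s \<in> ?S" for c s
    using that Im_cob_scale by (force simp: scaling)
  ultimately have "Id_on Z1 \<union> (diff_rel Z1 ?S \<union> (diff_rel Z1 ?S)\<inverse>)\<^sup>+ = diff_rel Z1 (fun_module.span ?S)"
    using cocycles1_diff by (intro fun_module.equiv_closure_diff_rel)
  then show ?thesis
    by (simp add: deformation_classes_def cohomology1_def coboundaries1_def
        linear_deformations_eq_cocycles1 equivalent_deformations_eq diff_rel_def)
qed

end

theorem mainTheorem6:
  fixes sg :: "'k::field_char_0 \<Rightarrow> 'g::ab_group_add \<Rightarrow> 'g"
    and sh :: "'k \<Rightarrow> 'h::ab_group_add \<Rightarrow> 'h"
    and brg :: "'g \<Rightarrow> 'g \<Rightarrow> 'g \<Rightarrow> 'g" and \<alpha>g :: "'g \<Rightarrow> 'g"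
    and brh :: "'h \<Rightarrow> 'h \<Rightarrow> 'h \<Rightarrow> 'h" and \<alpha>h :: "'h \<Rightarrow> 'h"
    and \<theta> :: "'g \<Rightarrow> 'g \<Rightarrow> 'h \<Rightarrow> 'h"
    and \<kappa> :: 'k and A :: "'h \<Rightarrow> 'g"
  assumes "regular_HLTS sg brg \<alpha>g"
    and "regular_HLTS sh brh \<alpha>h"
    and "action sg brg \<alpha>g sh brh \<alpha>h \<theta>"
    and "O_operator sg brg \<alpha>g sh brh \<alpha>h \<theta> \<kappa> A"
  shows "\<exists>F. bij_betw F (deformation_classes sg brg \<alpha>g sh brh \<alpha>h \<theta> \<kappa> A)
                         (cohomology1 sg brg \<alpha>g sh brh \<alpha>h \<theta> \<kappa> A)"
proof -
  interpret regular_weighted_O_operator sg sh brg \<alpha>g brh \<alpha>h \<theta> \<kappa> A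
    using assms by unfold_locales
  show ?thesis
    using bij_betw_id deformation_classes_eq_cohomology1 by metis
qed

end
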